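(* Fix a transition matrix $V$ from $\mathcal X$ to $\mathcal Y$ and assume there exists $y\in\mathcal Y$ such that $V_y$ is not a scalar multiple of $u_{\mathcal X}$. Let $\mathcal S_{\mathcal X}$ be the set of column-stochastic $d\times d$ matrices (a convex set with nonempty interior in its affine hull, equipped with the Lebesgue measure of that affine hull) and $\Delta_{\mathcal X}$ the probability simplex with its Lebesgue measure. Then for almost every $(W,P)\in\mathcal S_{\mathcal X}\times\Delta_{\mathcal X}$, $\operatorname{Ker}P^{k_{(W,V)}}[(W,V)]=\{0\}$ and $\mathcal V^{k_{(P,(W,V))}}(P)=\mathcal V_{\mathcal X}$. Also, for almost every $W\in\mathcal S_{\mathcal X}$, $\operatorname{Ker}P^{k_{(W,V)}}[(W,V)]=\{0\}$ and $\mathcal V^{k_{(P_W,(W,V))}}(P_W)=\mathcal V_{\mathcal X}$, where $P_W$ is the stationary distribution of $W$.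
   Context: Let $\mathcal X=\{1,\dots,d\}$, $\mathcal Y=\{1,\dots,d_Y\}$, $\mathcal V_{\mathcal X}=\mathbb R^{\mathcal X}$ (column vectors; distributions regarded as vectors), $u_{\mathcal X}$ the all-ones vector. For a column-stochastic $W$ on $\mathcal X$ and a transition matrix $V$ from $\mathcal X$ to $\mathcal Y$ ($V(y|x')\ge0$, $\sum_yV(y|x')=1$), the independent-type $\mathcal Y$-valued transition matrix $(W,V)$ is the family $W_y:=WD(V_y)$, where $V_y(x')=V(y|x')$ and $D(v)$ is diagonal with diagonal $v$. For $k\ge1$, $P^k[(W,V)]:\mathcal V_{\mathcal X}\to\mathbb R^{\mathcal Y^k}$, $(P^k[(W,V)]v)(y_k,\dots,y_1)=u_{\mathcal X}^TW_{y_k}\cdots W_{y_1}v$; $k_{(W,V)}$ is the least $k_0\ge1$ with $\bigcap_{k\ge1}\operatorname{Ker}P^k[(W,V)]=\operatorname{Ker}P^{k_0}[(W,V)]$; $K:=\operatorname{Ker}P^{k_{(W,V)}}[(W,V)]$. For a distribution $P$ and $k\ge0$, $\mathcal V^k(P)$ is the subspace of $\mathcal V_{\mathcal X}/K$ spanned by the classes of $W_{y_{k'}}\cdots W_{y_1}P$, $0\le k'\le k$, $y_i\in\mathcal Y$, and $k_{(P,(W,V))}$ is the least $k_1\ge1$ with $\bigcup_{k\ge1}\mathcal V^k(P)=\mathcal V^{k_1}(P)$ (when $K=\{0\}$ the quotient is identified with $\mathcal V_{\mathcal X}$). *)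

theory Defs
  imports "HOL-Analysis.Analysis"
begin

text \<open>Alphabet X is a finite type 'x, Y is a finite type 'y.
  Vectors in V_X are real^'x (columns), d x d matrices are real^'x^'x with
  W $ i $ j the (i,j) entry.\<close>

definition column_stochastic :: "real^'x::finite^'x \<Rightarrow> bool" where
  "column_stochastic W \<longleftrightarrow> (\<forall>i j. W $ i $ j \<ge> 0) \<and> (\<forall>j. (\<Sum>i\<in>UNIV. W $ i $ j) = 1)"

definition stochastic_matrices :: "(real^'x::finite^'x) set" where
  "stochastic_matrices = {W. column_stochastic W}"

definition prob_simplex :: "(real^'x::finite) set" where
  "prob_simplex = {P. (\<forall>i. P $ i \<ge> 0) \<and> (\<Sum>i\<in>UNIV. P $ i) = 1}"

text \<open>V y x' = V(y|x').\<close>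
definition transition_matrix :: "('y::finite \<Rightarrow> 'x::finite \<Rightarrow> real) \<Rightarrow> bool" where
  "transition_matrix V \<longleftrightarrow> (\<forall>y x. V y x \<ge> 0) \<and> (\<forall>x. (\<Sum>y\<in>UNIV. V y x) = 1)"

definition diag_mat :: "('x::finite \<Rightarrow> real) \<Rightarrow> real^'x^'x" where
  "diag_mat v = (\<chi> i j. if i = j then v i else 0)"

definition Wy :: "real^'x::finite^'x \<Rightarrow> ('y \<Rightarrow> 'x \<Rightarrow> real) \<Rightarrow> 'y \<Rightarrow> real^'x^'x" where
  "Wy W V y = W ** diag_mat (V y)"

text \<open>act W V [y1,...,yk] v = W_{yk} ... W_{y1} v\<close>
definition act :: "real^'x::finite^'x \<Rightarrow> ('y \<Rightarrow> 'x \<Rightarrow> real) \<Rightarrow> 'y list \<Rightarrow> real^'x \<Rightarrow> real^'x" where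
  "act W V ys v = fold (\<lambda>y w. Wy W V y *v w) ys v"

definition Pk :: "real^'x::finite^'x \<Rightarrow> ('y \<Rightarrow> 'x \<Rightarrow> real) \<Rightarrow> nat \<Rightarrow> real^'x \<Rightarrow> ('y list \<Rightarrow> real)" where
  "Pk W V k v = (\<lambda>ys. if length ys = k then (\<Sum>i\<in>UNIV. act W V ys v $ i) else 0)"

definition kerP :: "real^'x::finite^'x \<Rightarrow> ('y \<Rightarrow> 'x \<Rightarrow> real) \<Rightarrow> nat \<Rightarrow> (real^'x) set" where
  "kerP W V k = {v. Pk W V k v = (\<lambda>_. 0)}"

definition k_WV :: "real^'x::finite^'x \<Rightarrow> ('y \<Rightarrow> 'x \<Rightarrow> real) \<Rightarrow> nat" where
  "k_WV W V = (LEAST k0. k0 \<ge> 1 \<and> (\<Inter>k\<in>{1..}. kerP W V k) = kerP W V k0)"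

definition Kspace :: "real^'x::finite^'x \<Rightarrow> ('y \<Rightarrow> 'x \<Rightarrow> real) \<Rightarrow> (real^'x) set" where
  "Kspace W V = kerP W V (k_WV W V)"

text \<open>V^k(P), a subspace of V_X / K, represented by its preimage in V_X
  (span of the vectors plus K).\<close>
definition Vk :: "real^'x::finite^'x \<Rightarrow> ('y \<Rightarrow> 'x \<Rightarrow> real) \<Rightarrow> real^'x \<Rightarrow> nat \<Rightarrow> (real^'x) set" where
  "Vk W V P k = {a + b | a b. a \<in> span {act W V ys P | ys. length ys \<le> k} \<and> b \<in> Kspace W V}"

definition k_PWV :: "real^'x::finite^'x \<Rightarrow> ('y \<Rightarrow> 'x \<Rightarrow> real) \<Rightarrow> real^'x \<Rightarrow> nat" where
  "k_PWV W V P = (LEAST k1. k1 \<ge> 1 \<and> (\<Union>k\<in>{1..}. Vk W V P k) = Vk W V P k1)"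

definition stationary :: "real^'x::finite^'x \<Rightarrow> real^'x" where
  "stationary W = (THE P. P \<in> prob_simplex \<and> W *v P = P)"

text \<open>Charts for the affine hulls: the entries in row x0 (resp. coordinate x0) are
  determined by the others. The Lebesgue measure of the affine hull is (up to a constant)
  the image of Lebesgue measure on the remaining coordinates, so a set in the affine hull is
  null iff its cylinder preimage under these maps is Lebesgue-null in the full space.\<close>
definition mat_chart :: "'x::finite \<Rightarrow> real^'x^'x \<Rightarrow> real^'x^'x" where
  "mat_chart x0 M = (\<chi> i j. if i = x0 then 1 - (\<Sum>i'\<in>UNIV - {x0}. M $ i' $ j) else M $ i $ j)"

definition vec_chart :: "'x::finite \<Rightarrow> real^'x \<Rightarrow> real^'x" where
  "vec_chart x0 p = (\<chi> i. if i = x0 then 1 - (\<Sum>i'\<in>UNIV - {x0}. p $ i') else p $ i)"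

end

theory Submission
  imports Defs "HOL-Combinatorics.Cycles"
begin

text \<open>
  Both conclusions are spanning conditions on finitely many vectors depending polynomially on the
  data: the kernel is trivial once the rows \<open>u\<^sup>T W\<^sub>y\<^sub>k \<cdots> W\<^sub>y\<^sub>1\<close> of a fixed length \<open>K\<close> span the
  space, and the reachable space is everything once the vectors \<open>W\<^sub>y\<^sub>k \<cdots> W\<^sub>y\<^sub>1 P\<close> with
  \<open>k \<le> K\<close> span it.
  A family spans iff its Gram determinant, a polynomial, does not vanish, and a polynomial that
  is not identically zero vanishes only on a Lebesgue null set (induction on the dimension with
  Fubini). So it suffices to find one witness. If \<open>V\<^sub>y\<close> is not constant, take the permutation matrix
  of a cyclic permutation which traverses the level set \<open>{V\<^sub>y = V\<^sub>y a}\<close> as one block: the span of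
  the words is then invariant under the shift and under multiplication by the rotations of
  \<open>V\<^sub>y\<close>, which separate points, so it contains every indicator vector. For the stationary
  distribution, Cramer's rule writes \<open>P\<^sub>W\<close> as a polynomial in \<open>W\<close> divided by a polynomial that does
  not vanish at the witness, whose stationary distribution is uniform.
\<close>

section \<open>Polynomials vanish only on null sets\<close>

inductive coord_polynomial :: "'i set \<Rightarrow> (('i \<Rightarrow> real) \<Rightarrow> real) \<Rightarrow> bool" for I where
  const: "coord_polynomial I (\<lambda>x. c)"
| coord: "j \<in> I \<Longrightarrow> coord_polynomial I (\<lambda>x. x j)"
| add: "coord_polynomial I f \<Longrightarrow> coord_polynomial I g \<Longrightarrow> coord_polynomial I (\<lambda>x. f x + g x)"
| mult: "coord_polynomial I f \<Longrightarrow> coord_polynomial I g \<Longrightarrow> coord_polynomial I (\<lambda>x. f x * g x)"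

declare coord_polynomial.intros [intro]

lemma coord_polynomial_cong:
  "coord_polynomial I f \<Longrightarrow> (\<And>j. j \<in> I \<Longrightarrow> x j = x' j) \<Longrightarrow> f x = f x'"
  by (induction rule: coord_polynomial.induct) auto

lemma coord_polynomial_sum [intro]:
  "finite A \<Longrightarrow> (\<And>a. a \<in> A \<Longrightarrow> coord_polynomial I (f a)) \<Longrightarrow> coord_polynomial I (\<lambda>x. \<Sum>a\<in>A. f a x)"
  by (induction A rule: finite_induct) auto

lemma borel_measurable_coord_polynomial:
  "coord_polynomial I f \<Longrightarrow> I \<subseteq> J \<Longrightarrow> f \<in> borel_measurable (Pi\<^sub>M J (\<lambda>_. lborel))"
  by (induction rule: coord_polynomial.induct) (auto intro: measurable_component_singleton)

lemma sum_atMost_pad: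
  fixes c :: "nat \<Rightarrow> 'a::comm_semiring_1"
  assumes "n \<le> N"
  shows "(\<Sum>k\<le>n. c k * y ^ k) = (\<Sum>k\<le>N. (if k \<le> n then c k else 0) * y ^ k)"
  using assms by (intro sum.mono_neutral_cong_left) auto

definition coord_expansion :: "'i set \<Rightarrow> 'i \<Rightarrow> (('i \<Rightarrow> real) \<Rightarrow> real) \<Rightarrow> bool" where
  "coord_expansion I i f \<longleftrightarrow>
     (\<exists>n c. (\<forall>k. coord_polynomial I (c k)) \<and> (\<forall>x. f x = (\<Sum>k\<le>n. c k x * x i ^ k)))"

lemma coord_expansion_add:
  assumes "coord_expansion I i f" "coord_expansion I i g"
  shows "coord_expansion I i (\<lambda>x. f x + g x)"
proof -
  obtain n1 c1 n2 c2 where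
    c1: "\<forall>k. coord_polynomial I (c1 k)" "\<forall>x. f x = (\<Sum>k\<le>n1. c1 k x * x i ^ k)" and
    c2: "\<forall>k. coord_polynomial I (c2 k)" "\<forall>x. g x = (\<Sum>k\<le>n2. c2 k x * x i ^ k)"
    using assms by (auto simp: coord_expansion_def)
  define b1 where "b1 k = (if k \<le> n1 then c1 k else (\<lambda>x. 0))" for k
  define b2 where "b2 k = (if k \<le> n2 then c2 k else (\<lambda>x. 0))" for k
  have "f x + g x = (\<Sum>k\<le>n1 + n2. (b1 k x + b2 k x) * x i ^ k)" for x
    using sum_atMost_pad[of n1 "n1 + n2" "\<lambda>k. c1 k x"] sum_atMost_pad[of n2 "n1 + n2" "\<lambda>k. c2 k x"]
    by (simp add: c1(2) c2(2) b1_def b2_def if_distrib[of "\<lambda>f. f x"] distrib_right sum.distrib)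
  moreover have "coord_polynomial I (\<lambda>x. b1 k x + b2 k x)" for k
    using c1(1) c2(1) by (auto simp: b1_def b2_def)
  ultimately show ?thesis
    unfolding coord_expansion_def
    by (intro exI[of _ "n1 + n2"] exI[of _ "\<lambda>k x. b1 k x + b2 k x"]) auto
qed

lemma coord_expansion_mult:
  assumes "coord_expansion I i f" "coord_expansion I i g"
  shows "coord_expansion I i (\<lambda>x. f x * g x)"
proof -
  obtain n1 c1 n2 c2 where
    c1: "\<forall>k. coord_polynomial I (c1 k)" "\<forall>x. f x = (\<Sum>k\<le>n1. c1 k x * x i ^ k)" and
    c2: "\<forall>k. coord_polynomial I (c2 k)" "\<forall>x. g x = (\<Sum>k\<le>n2. c2 k x * x i ^ k)"
    using assms by (auto simp: coord_expansion_def)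
  define b1 where "b1 k = (if k \<le> n1 then c1 k else (\<lambda>x. 0))" for k
  define b2 where "b2 k = (if k \<le> n2 then c2 k else (\<lambda>x. 0))" for k
  have "f x * g x = (\<Sum>r\<le>n1 + n2. (\<Sum>k\<le>r. b1 k x * b2 (r - k) x) * x i ^ r)" for x
  proof -
    have "f x * g x = (\<Sum>k\<le>n1. b1 k x * x i ^ k) * (\<Sum>k\<le>n2. b2 k x * x i ^ k)"
      by (simp add: c1(2) c2(2) b1_def b2_def)
    also have "\<dots> = (\<Sum>r\<le>n1 + n2. (\<Sum>k\<le>r. b1 k x * b2 (r - k) x) * x i ^ r)"
      by (rule polynomial_product) (auto simp: b1_def b2_def)
    finally show ?thesis .
  qed
  moreover have "coord_polynomial I (\<lambda>x. \<Sum>k\<le>r. b1 k x * b2 (r - k) x)" for r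
    using c1(1) c2(1) by (intro coord_polynomial_sum) (auto simp: b1_def b2_def)
  ultimately show ?thesis
    unfolding coord_expansion_def
    by (intro exI[of _ "n1 + n2"] exI[of _ "\<lambda>r x. \<Sum>k\<le>r. b1 k x * b2 (r - k) x"]) auto
qed

lemma coord_polynomial_insert_expansion:
  assumes "coord_polynomial (insert i I) f" "i \<notin> I"
  shows "coord_expansion I i f"
  using assms(1)
proof (induction rule: coord_polynomial.induct)
  case (const a)
  show ?case
    unfolding coord_expansion_def by (intro exI[of _ 0] exI[of _ "\<lambda>k x. a"]) auto
next
  case (coord j)
  show ?case
  proof (cases "j = i")
    case True
    show ?thesis
      unfolding coord_expansion_def
      by (intro exI[of _ 1] exI[of _ "\<lambda>k x. if k = 1 then 1 else 0"]) (auto simp: True)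
  next
    case False
    with coord assms(2) show ?thesis
      unfolding coord_expansion_def by (intro exI[of _ 0] exI[of _ "\<lambda>k x. x j"]) auto
  qed
qed (simp_all add: coord_expansion_add coord_expansion_mult)

lemma (in product_sigma_finite) null_sets_insert_if_AE_sections:
  assumes "finite I" "i \<notin> I" "Z \<in> sets (Pi\<^sub>M (insert i I) M)"
    and "AE x in Pi\<^sub>M I M. \<exists>N\<in>null_sets (M i). \<forall>y\<in>space (M i). x(i := y) \<in> Z \<longrightarrow> y \<in> N"
  shows "Z \<in> null_sets (Pi\<^sub>M (insert i I) M)"
proof -
  have "emeasure (Pi\<^sub>M (insert i I) M) Z = (\<integral>\<^sup>+ x. indicator Z x \<partial>Pi\<^sub>M (insert i I) M)"
    using assms(3) by simp
  also have "\<dots> = (\<integral>\<^sup>+ x. (\<integral>\<^sup>+ y. indicator Z (x(i := y)) \<partial>M i) \<partial>Pi\<^sub>M I M)"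
    using assms(1-3) by (subst product_nn_integral_insert) auto
  also have "\<dots> = (\<integral>\<^sup>+ x. 0 \<partial>Pi\<^sub>M I M)"
  proof (rule nn_integral_cong_AE)
    show "AE x in Pi\<^sub>M I M. (\<integral>\<^sup>+ y. indicator Z (x(i := y)) \<partial>M i) = 0"
      using assms(4)
    proof eventually_elim
      case (elim x)
      then obtain N where N: "N \<in> null_sets (M i)" "\<forall>y\<in>space (M i). x(i := y) \<in> Z \<longrightarrow> y \<in> N"
        by blast
      have "(\<integral>\<^sup>+ y. indicator Z (x(i := y)) \<partial>M i) \<le> (\<integral>\<^sup>+ y. indicator N y \<partial>M i)"
        using N(2) by (intro nn_integral_mono) (auto simp: indicator_def)
      also have "\<dots> = 0"
        using N(1) by (simp add: null_sets_def)
      finally show ?case by simp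
    qed
  qed
  finally show ?thesis
    using assms(3) by (simp add: null_sets_def)
qed

lemma coord_polynomial_zero_set_null:
  assumes "finite I" "coord_polynomial I f" "f z \<noteq> 0"
  shows "{x \<in> space (Pi\<^sub>M I (\<lambda>_. lborel)). f x = 0} \<in> null_sets (Pi\<^sub>M I (\<lambda>_. lborel))"
  using assms
proof (induction I arbitrary: f z rule: finite_induct)
  case empty
  have "f x \<noteq> 0" for x
    using coord_polynomial_cong[OF empty.prems(1), of x z] empty.prems(2) by simp
  then show ?case by simp
next
  case (insert i I)
  interpret product_sigma_finite "\<lambda>_. lborel :: real measure" ..
  obtain n c where c: "\<And>k. coord_polynomial I (c k)" "\<And>x. f x = (\<Sum>k\<le>n. c k x * x i ^ k)"
    using coord_polynomial_insert_expansion[OF insert.prems(1) insert.hyps(2)]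
    by (auto simp: coord_expansion_def)
  have "\<exists>k\<le>n. c k z \<noteq> 0"
  proof (rule ccontr)
    assume "\<not> (\<exists>k\<le>n. c k z \<noteq> 0)"
    then have "f z = 0" by (simp add: c(2))
    with insert.prems(2) show False by simp
  qed
  then obtain k0 where k0: "k0 \<le> n" "c k0 z \<noteq> 0" by blast
  have "AE x in Pi\<^sub>M I (\<lambda>_. lborel). c k0 x \<noteq> 0"
    using insert.IH[OF c(1) k0(2)] by (rule AE_I') auto
  then have "AE x in Pi\<^sub>M I (\<lambda>_. lborel). \<exists>N\<in>null_sets lborel.
      \<forall>y\<in>space lborel. x(i := y) \<in> {x \<in> space (Pi\<^sub>M (insert i I) (\<lambda>_. lborel)). f x = 0} \<longrightarrow> y \<in> N"
  proof eventually_elim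
    case (elim x)
    have "c k (x(i := y)) = c k x" for k y
      by (rule coord_polynomial_cong[OF c(1)]) (use insert.hyps(2) in auto)
    moreover have "finite {y. (\<Sum>k\<le>n. c k x * y ^ k) = 0}"
      using elim k0(1) by (auto simp: polyfun_finite_roots)
    ultimately show ?case
      by (intro bexI[of _ "{y. (\<Sum>k\<le>n. c k x * y ^ k) = 0}"] finite_imp_null_set_lborel)
        (auto simp: c(2))
  qed
  moreover have "f \<in> borel_measurable (Pi\<^sub>M (insert i I) (\<lambda>_. lborel))"
    by (rule borel_measurable_coord_polynomial[OF insert.prems(1) order_refl])
  ultimately show ?case
    using insert.hyps by (intro null_sets_insert_if_AE_sections) auto
qed

lemmas real_polynomial_function_linear = real_polynomial_function.intros(1)
lemmas real_polynomial_function_const = real_polynomial_function.intros(2)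
lemmas real_polynomial_function_mult = real_polynomial_function.intros(4)

lemma real_polynomial_function_coord_polynomial:
  fixes f :: "'a::euclidean_space \<Rightarrow> real"
  assumes "real_polynomial_function f"
  shows "coord_polynomial Basis (\<lambda>g. f (\<Sum>b\<in>Basis. g b *\<^sub>R b))"
  using assms
proof (induction rule: real_polynomial_function.induct)
  case (linear f)
  then have "f (\<Sum>b\<in>Basis. g b *\<^sub>R b) = (\<Sum>b\<in>Basis. g b * f b)" for g
    by (simp add: linear_sum linear_scale bounded_linear.linear)
  moreover have "coord_polynomial Basis (\<lambda>g. \<Sum>b\<in>Basis. g b * f b)"
    by (intro coord_polynomial_sum) auto
  ultimately show ?case by simp
qed auto

lemma real_polynomial_function_zero_set_null:
  fixes f :: "'a::euclidean_space \<Rightarrow> real"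
  assumes "real_polynomial_function f" "f z \<noteq> 0"
  shows "{x. f x = 0} \<in> null_sets lborel"
proof -
  let ?M = "\<Pi>\<^sub>M b\<in>Basis. lborel" and ?e = "\<lambda>g. \<Sum>b\<in>(Basis::'a set). g b *\<^sub>R b"
  have "?e (\<lambda>b. z \<bullet> b) = z"
    by (simp add: euclidean_representation)
  then have "{g \<in> space ?M. f (?e g) = 0} \<in> null_sets ?M"
    using assms
    by (intro coord_polynomial_zero_set_null[where z = "\<lambda>b. z \<bullet> b"]
        real_polynomial_function_coord_polynomial) auto
  moreover have "?e -` {x. f x = 0} \<inter> space ?M = {g \<in> space ?M. f (?e g) = 0}"
    by auto
  moreover have "{x. f x = 0} \<in> sets borel"
    using continuous_real_polymonial_function[OF assms(1)]
    by (intro borel_closed closed_Collect_eq continuous_intros)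
      (auto simp: continuous_at_imp_continuous_on)
  ultimately have "{x. f x = 0} \<in> null_sets (distr ?M borel ?e)"
    by (subst null_sets_distr_iff) auto
  then show ?thesis
    by (simp add: lborel_eq[symmetric])
qed

lemma AE_real_polynomial_function_nonzero:
  fixes f :: "'a::euclidean_space \<Rightarrow> real"
  assumes "real_polynomial_function f" "f z \<noteq> 0"
  shows "AE x in lborel. f x \<noteq> 0"
  using real_polynomial_function_zero_set_null[OF assms] by (rule AE_I') auto

section \<open>Polynomial matrix functions and Gram determinants\<close>

definition polynomial_vector_function :: "('a::real_normed_vector \<Rightarrow> real^'n) \<Rightarrow> bool" where
  "polynomial_vector_function F \<longleftrightarrow> (\<forall>i. real_polynomial_function (\<lambda>z. F z $ i))"

definition polynomial_matrix_function :: "('a::real_normed_vector \<Rightarrow> real^'n^'m) \<Rightarrow> bool" where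
  "polynomial_matrix_function F \<longleftrightarrow> (\<forall>i j. real_polynomial_function (\<lambda>z. F z $ i $ j))"

lemma polynomial_vector_function_bounded_linear:
  "bounded_linear F \<Longrightarrow> polynomial_vector_function F"
  unfolding polynomial_vector_function_def
  by (simp add: real_polynomial_function_linear bounded_linear_compose[OF bounded_linear_vec_nth])

lemma polynomial_matrix_function_bounded_linear:
  "bounded_linear F \<Longrightarrow> polynomial_matrix_function F"
  unfolding polynomial_matrix_function_def
  by (simp add: real_polynomial_function_linear bounded_linear_compose[OF bounded_linear_vec_nth])

lemma polynomial_matrix_function_const: "polynomial_matrix_function (\<lambda>z. A)"
  by (simp add: polynomial_matrix_function_def real_polynomial_function_const)

lemma polynomial_matrix_function_mult:
  "polynomial_matrix_function A \<Longrightarrow> polynomial_matrix_function B \<Longrightarrow>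
    polynomial_matrix_function (\<lambda>z. A z ** B z)"
  unfolding polynomial_matrix_function_def matrix_matrix_mult_def
  by (simp add: real_polynomial_function_sum real_polynomial_function_mult)

lemma polynomial_vector_function_mult:
  "polynomial_matrix_function A \<Longrightarrow> polynomial_vector_function v \<Longrightarrow>
    polynomial_vector_function (\<lambda>z. A z *v v z)"
  unfolding polynomial_matrix_function_def polynomial_vector_function_def matrix_vector_mult_def
  by (simp add: real_polynomial_function_sum real_polynomial_function_mult)

lemma real_polynomial_function_det:
  "polynomial_matrix_function A \<Longrightarrow> real_polynomial_function (\<lambda>z. det (A z))"
  unfolding det_def polynomial_matrix_function_def
  by (intro real_polynomial_function_sum real_polynomial_function_mult
      real_polynomial_function_prod)
    (auto simp: finite_permutations)

lemma polynomial_matrix_function_mat_chart: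
  "polynomial_matrix_function F \<Longrightarrow> polynomial_matrix_function (\<lambda>z. mat_chart x0 (F z))"
  unfolding polynomial_matrix_function_def mat_chart_def
  by (intro allI, case_tac "i = x0")
    (auto simp: real_polynomial_function_const real_polynomial_function_diff
      real_polynomial_function_sum)

lemma polynomial_vector_function_vec_chart:
  "polynomial_vector_function F \<Longrightarrow> polynomial_vector_function (\<lambda>z. vec_chart x0 (F z))"
  unfolding polynomial_vector_function_def vec_chart_def
  by (intro allI, case_tac "i = x0")
    (auto simp: real_polynomial_function_const real_polynomial_function_diff
      real_polynomial_function_sum)

lemma mat_chart_eq: "column_stochastic W \<Longrightarrow> mat_chart x0 W = W"
  by (simp add: mat_chart_def column_stochastic_def vec_eq_iff sum.remove[of UNIV x0] algebra_simps)

lemma vec_chart_eq: "(\<Sum>i\<in>UNIV. p $ i) = 1 \<Longrightarrow> vec_chart x0 p = p"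
  by (simp add: vec_chart_def vec_eq_iff sum.remove[of UNIV x0] algebra_simps)

definition gram_matrix :: "'l set \<Rightarrow> ('l \<Rightarrow> real^'n) \<Rightarrow> real^'n^'n" where
  "gram_matrix L r = (\<chi> a b. \<Sum>l\<in>L. r l $ a * r l $ b)"

lemma gram_matrix_mult_vec: "gram_matrix L r *v v = (\<Sum>l\<in>L. (r l \<bullet> v) *\<^sub>R r l)"
  unfolding gram_matrix_def matrix_vector_mult_def inner_vec_def
  by (simp add: vec_eq_iff sum_component sum_distrib_left sum_distrib_right mult_ac
      sum.swap[where A = L])

lemma span_eq_UNIV_iff_orthogonal:
  fixes S :: "'a::euclidean_space set"
  shows "span S = UNIV \<longleftrightarrow> (\<forall>a. (\<forall>x\<in>S. a \<bullet> x = 0) \<longrightarrow> a = 0)"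
proof
  assume S: "span S = UNIV"
  show "\<forall>a. (\<forall>x\<in>S. a \<bullet> x = 0) \<longrightarrow> a = 0"
  proof (intro allI impI)
    fix a assume a: "\<forall>x\<in>S. a \<bullet> x = 0"
    have "orthogonal a a"
    proof (rule orthogonal_to_span)
      show "a \<in> span S" using S by simp
    qed (use a in \<open>simp add: orthogonal_def\<close>)
    then show "a = 0" by (simp add: orthogonal_def)
  qed
next
  assume orth: "\<forall>a. (\<forall>x\<in>S. a \<bullet> x = 0) \<longrightarrow> a = 0"
  show "span S = UNIV"
  proof (rule ccontr)
    assume "span S \<noteq> UNIV"
    then obtain a where "a \<noteq> 0" "\<forall>x\<in>span S. a \<bullet> x = 0"
      using span_not_UNIV_orthogonal by blast
    with orth show False
      using span_base by blast
  qed
qed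

lemma det_gram_matrix_nonzero_iff:
  assumes "finite L"
  shows "det (gram_matrix L r) \<noteq> 0 \<longleftrightarrow> span (r ` L) = UNIV"
proof -
  have ker: "gram_matrix L r *v v = 0 \<longleftrightarrow> (\<forall>l\<in>L. r l \<bullet> v = 0)" for v
  proof
    assume "gram_matrix L r *v v = 0"
    moreover have "v \<bullet> (gram_matrix L r *v v) = (\<Sum>l\<in>L. (r l \<bullet> v)\<^sup>2)"
      by (simp add: gram_matrix_mult_vec inner_sum_right power2_eq_square inner_commute)
    ultimately have "(\<Sum>l\<in>L. (r l \<bullet> v)\<^sup>2) = 0"
      by simp
    then show "\<forall>l\<in>L. r l \<bullet> v = 0"
      using assms by (simp add: sum_nonneg_eq_0_iff)
  qed (simp add: gram_matrix_mult_vec)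
  have "det (gram_matrix L r) \<noteq> 0 \<longleftrightarrow> (\<forall>v. gram_matrix L r *v v = 0 \<longrightarrow> v = 0)"
    by (simp add: invertible_det_nz[symmetric] invertible_left_inverse matrix_left_invertible_ker)
  also have "\<dots> \<longleftrightarrow> (\<forall>v. (\<forall>x\<in>r ` L. v \<bullet> x = 0) \<longrightarrow> v = 0)"
    by (simp add: ker inner_commute)
  also have "\<dots> \<longleftrightarrow> span (r ` L) = UNIV"
    by (rule span_eq_UNIV_iff_orthogonal[symmetric])
  finally show ?thesis .
qed

lemma AE_span_eq_UNIV:
  fixes r :: "'a::euclidean_space \<Rightarrow> 'l \<Rightarrow> real^'n"
  assumes "finite L" "\<And>l. l \<in> L \<Longrightarrow> polynomial_vector_function (\<lambda>z. r z l)"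
    and "span (r z' ` L) = UNIV"
  shows "AE z in lborel. span (r z ` L) = UNIV"
proof -
  have "real_polynomial_function (\<lambda>z. det (gram_matrix L (r z)))"
    using assms(1,2) unfolding gram_matrix_def polynomial_vector_function_def
    by (intro real_polynomial_function_det)
      (auto simp: polynomial_matrix_function_def
        intro!: real_polynomial_function_sum real_polynomial_function_mult)
  moreover have "det (gram_matrix L (r z')) \<noteq> 0"
    using assms(3) by (simp add: det_gram_matrix_nonzero_iff[OF assms(1)])
  ultimately show ?thesis
    by (simp add: AE_real_polynomial_function_nonzero
        det_gram_matrix_nonzero_iff[OF assms(1), symmetric])
qed

section \<open>Products along words\<close>

definition word_matrix :: "real^'x::finite^'x \<Rightarrow> ('y \<Rightarrow> 'x \<Rightarrow> real) \<Rightarrow> 'y list \<Rightarrow> real^'x^'x" where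
  "word_matrix W V ys = fold (\<lambda>y A. Wy W V y ** A) ys (mat 1)"

definition obs_row :: "real^'x::finite^'x \<Rightarrow> ('y \<Rightarrow> 'x \<Rightarrow> real) \<Rightarrow> 'y list \<Rightarrow> real^'x" where
  "obs_row W V ys = (\<chi> i. 1) v* word_matrix W V ys"

lemma fold_Wy_mult_right:
  "fold (\<lambda>y A. Wy W V y ** A) ys (A0 ** B) = fold (\<lambda>y A. Wy W V y ** A) ys A0 ** B"
  by (induction ys arbitrary: A0) (auto simp: matrix_mul_assoc)

lemma fold_Wy_mult_vec:
  "fold (\<lambda>y A. Wy W V y ** A) ys A0 *v v = fold (\<lambda>y w. Wy W V y *v w) ys (A0 *v v)"
  by (induction ys arbitrary: A0 v) (auto simp: matrix_vector_mul_assoc)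

lemma act_eq_word_matrix: "act W V ys v = word_matrix W V ys *v v"
  using fold_Wy_mult_vec[of W V ys "mat 1" v] by (simp add: act_def word_matrix_def)

lemma act_snoc: "act W V (ys @ [y]) v = Wy W V y *v act W V ys v"
  by (simp add: act_def)

lemma word_matrix_Cons: "word_matrix W V (y # ys) = word_matrix W V ys ** Wy W V y"
  using fold_Wy_mult_right[of W V ys "mat 1" "Wy W V y"] by (simp add: word_matrix_def)

lemma word_matrix_snoc: "word_matrix W V (ys @ [y]) = Wy W V y ** word_matrix W V ys"
  by (simp add: word_matrix_def)

lemma obs_row_Nil: "obs_row W V [] = (\<chi> i. 1)"
  by (simp add: obs_row_def word_matrix_def)

lemma obs_row_Cons: "obs_row W V (y # ys) = obs_row W V ys v* Wy W V y"
  by (simp add: obs_row_def word_matrix_Cons vector_matrix_mul_assoc)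

lemma sum_act_eq_inner_obs_row: "(\<Sum>i\<in>UNIV. act W V ys v $ i) = obs_row W V ys \<bullet> v"
proof -
  have "(\<Sum>i\<in>UNIV. w $ i) = (\<chi> i. 1) \<bullet> w" for w :: "real^'x"
    by (simp add: inner_vec_def)
  then show ?thesis
    by (simp add: obs_row_def dot_lmul_matrix act_eq_word_matrix)
qed

lemma sum_vector_matrix_mult: "(\<Sum>y\<in>A. f y) v* M = (\<Sum>y\<in>A. f y v* M)"
  by (simp add: vec_eq_iff sum_component vector_matrix_mult_def sum_distrib_right sum.swap[of _ A])

lemma sum_obs_row_snoc:
  assumes "transition_matrix V" "column_stochastic W"
  shows "(\<Sum>y\<in>UNIV. obs_row W V (ys @ [y])) = obs_row W V ys"
proof -
  have "(\<Sum>y\<in>UNIV. (\<chi> i. 1) v* Wy W V y) = (\<chi> i. (1::real))"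
    using assms
    by (simp add: vec_eq_iff sum_component vector_matrix_mult_def Wy_def diag_mat_def
        matrix_matrix_mult_def if_distrib[of "\<lambda>t. _ * t"] sum.swap[of _ UNIV]
        sum_distrib_left[symmetric] sum_distrib_right[symmetric] transition_matrix_def
        column_stochastic_def cong: if_cong)
  then show ?thesis
    by (simp add: obs_row_def word_matrix_snoc vector_matrix_mul_assoc[symmetric]
        sum_vector_matrix_mult[symmetric])
qed

lemma polynomial_matrix_function_word_matrix:
  assumes "polynomial_matrix_function F"
  shows "polynomial_matrix_function (\<lambda>z. word_matrix (F z) V ys)"
proof (induction ys)
  case Nil
  then show ?case
    by (simp add: word_matrix_def polynomial_matrix_function_const)
next
  case (Cons y ys)
  then show ?case
    unfolding word_matrix_Cons Wy_def
    by (intro polynomial_matrix_function_mult assms polynomial_matrix_function_const)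
qed

lemma polynomial_vector_function_obs_row:
  "polynomial_matrix_function F \<Longrightarrow> polynomial_vector_function (\<lambda>z. obs_row (F z) V ys)"
  using polynomial_matrix_function_word_matrix[of F V ys]
  unfolding obs_row_def polynomial_vector_function_def polynomial_matrix_function_def
    vector_matrix_mult_def
  by (simp add: real_polynomial_function_sum real_polynomial_function_mult
      real_polynomial_function_const)

lemma polynomial_vector_function_act:
  "polynomial_matrix_function F \<Longrightarrow> polynomial_vector_function P \<Longrightarrow>
    polynomial_vector_function (\<lambda>z. act (F z) V ys (P z))"
  unfolding act_eq_word_matrix
  by (intro polynomial_vector_function_mult polynomial_matrix_function_word_matrix)

lemma finite_words_length_eq: "finite {ys :: 'y::finite list. length ys = k}"
  using finite_lists_length_eq[of "UNIV :: 'y set" k] by simp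

lemma finite_words_length_le: "finite {ys :: 'y::finite list. length ys \<le> k}"
  using finite_lists_length_le[of "UNIV :: 'y set" k] by simp

lemma span_words_length_le_eq_UNIV:
  fixes f :: "'y::finite list \<Rightarrow> 'a::euclidean_space"
  assumes "span (range f) = UNIV"
  obtains K where "span (f ` {ys. length ys \<le> K}) = UNIV"
proof -
  obtain B where B: "B \<subseteq> range f" "independent B" "range f \<subseteq> span B"
    by (rule maximal_independent_subset)
  obtain C where C: "finite C" "B = f ` C"
    using finite_subset_image[OF finiteI_independent[OF B(2)] B(1)] by blast
  define K where "K = Max (length ` C)"
  have "B \<subseteq> f ` {ys. length ys \<le> K}"
    using C by (auto simp: K_def)
  then have "span (range f) \<subseteq> span (f ` {ys. length ys \<le> K})"
    using B(3) by (meson span_minimal span_mono subspace_span order_trans)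
  then show ?thesis
    using assms that by auto
qed

lemma span_obs_row_length_eq_UNIV:
  fixes V :: "'y::finite \<Rightarrow> 'x::finite \<Rightarrow> real"
  assumes "transition_matrix V" "column_stochastic W" "span (range (obs_row W V)) = UNIV"
  obtains K where "K \<ge> 1" "span (obs_row W V ` {ys. length ys = K}) = UNIV"
proof -
  obtain K where K: "span (obs_row W V ` {ys. length ys \<le> K}) = UNIV"
    using span_words_length_le_eq_UNIV[OF assms(3)] by blast
  let ?S = "span (obs_row W V ` {ys. length ys = Suc K})"
  have in_S: "obs_row W V ys \<in> ?S" if "length ys + n = Suc K" for ys n
    using that
  proof (induction n arbitrary: ys)
    case 0
    then show ?case by (intro span_base) auto
  next
    case (Suc n)
    then have "(\<Sum>y\<in>UNIV. obs_row W V (ys @ [y])) \<in> ?S"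
      by (intro span_sum) auto
    then show ?case
      by (simp add: sum_obs_row_snoc[OF assms(1,2)])
  qed
  have "obs_row W V ` {ys. length ys \<le> K} \<subseteq> ?S"
  proof (clarify)
    fix ys :: "'y list" assume "length ys \<le> K"
    then show "obs_row W V ys \<in> ?S"
      using in_S[of ys "Suc K - length ys"] by simp
  qed
  then have "UNIV \<subseteq> ?S"
    using K span_minimal[OF _ subspace_span] by metis
  then have "?S = UNIV"
    by blast
  then show ?thesis
    using that[of "Suc K"] by simp
qed

lemma span_act_length_le_eq_UNIV:
  fixes V :: "'y::finite \<Rightarrow> 'x::finite \<Rightarrow> real"
  assumes "span (range (\<lambda>ys. act W V ys P)) = UNIV"
  obtains K where "K \<ge> 1" "span ((\<lambda>ys. act W V ys P) ` {ys. length ys \<le> K}) = UNIV"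
proof -
  obtain K where K: "span ((\<lambda>ys. act W V ys P) ` {ys. length ys \<le> K}) = UNIV"
    using span_words_length_le_eq_UNIV[OF assms] by blast
  have "span ((\<lambda>ys. act W V ys P) ` {ys. length ys \<le> K})
      \<subseteq> span ((\<lambda>ys. act W V ys P) ` {ys. length ys \<le> Suc K})"
    by (intro span_mono image_mono) auto
  then show ?thesis
    using K that[of "Suc K"] by auto
qed

lemma span_act_scaleR:
  assumes "c \<noteq> 0" "finite L"
  shows "span ((\<lambda>ys. act W V ys (c *\<^sub>R P)) ` L) = span ((\<lambda>ys. act W V ys P) ` L)"
proof -
  have "(\<lambda>ys. act W V ys (c *\<^sub>R P)) ` L = (\<lambda>x. c *\<^sub>R x) ` (\<lambda>ys. act W V ys P) ` L"
    by (auto simp: act_eq_word_matrix matrix_vector_mult_scaleR)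
  then show ?thesis
    using span_image_scale[of "(\<lambda>ys. act W V ys P) ` L" "\<lambda>_. c"] assms by simp
qed

lemma kerP_eq_zero:
  assumes "span (obs_row W V ` {ys. length ys = k}) = UNIV"
  shows "kerP W V k = {0}"
proof -
  have "kerP W V k = {v. \<forall>x\<in>obs_row W V ` {ys. length ys = k}. v \<bullet> x = 0}"
    by (auto simp: kerP_def Pk_def fun_eq_iff sum_act_eq_inner_obs_row inner_commute)
  moreover have "\<forall>v. (\<forall>x\<in>obs_row W V ` {ys. length ys = k}. v \<bullet> x = 0) \<longrightarrow> v = 0"
    using assms by (simp only: span_eq_UNIV_iff_orthogonal)
  ultimately show ?thesis
    by auto
qed

lemma Kspace_eq_zero:
  assumes "kerP W V k = {0}" "k \<ge> 1"
  shows "Kspace W V = {0}"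
proof -
  have "0 \<in> kerP W V j" for j
    by (simp add: kerP_def Pk_def act_eq_word_matrix fun_eq_iff)
  then have I: "(\<Inter>j\<in>{1..}. kerP W V j) = {0}"
    using assms by auto
  have "(\<Inter>j\<in>{1..}. kerP W V j) = kerP W V (k_WV W V)"
    unfolding k_WV_def by (rule LeastI2[of _ k]) (use assms I in auto)
  then show ?thesis
    using I by (simp add: Kspace_def)
qed

lemma Vk_k_PWV_eq_UNIV:
  assumes "span ((\<lambda>ys. act W V ys P) ` {ys. length ys \<le> k}) = UNIV" "k \<ge> 1"
  shows "Vk W V P (k_PWV W V P) = UNIV"
proof -
  have zero: "0 \<in> Kspace W V"
    by (simp add: Kspace_def kerP_def Pk_def act_eq_word_matrix fun_eq_iff)
  have full: "Vk W V P j = UNIV" if "k \<le> j" for j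
  proof -
    have "(\<lambda>ys. act W V ys P) ` {ys. length ys \<le> k} \<subseteq> {act W V ys P | ys. length ys \<le> j}"
      using that by auto
    then have "span {act W V ys P | ys. length ys \<le> j} = UNIV"
      using assms(1) span_mono by blast
    then have "x + 0 \<in> Vk W V P j" for x
      unfolding Vk_def using zero by blast
    then show ?thesis
      by auto
  qed
  then have U: "(\<Union>j\<in>{1..}. Vk W V P j) = UNIV"
    using assms(2) by auto
  have "(\<Union>j\<in>{1..}. Vk W V P j) = Vk W V P (k_PWV W V P)"
    unfolding k_PWV_def by (rule LeastI2[of _ k]) (use assms(2) U full in auto)
  then show ?thesis
    using U by simp
qed

section \<open>A cyclic permutation as witness\<close>

lemma subspace_eq_UNIV_if_mult_closed:
  fixes S :: "(real^'x::finite) set" and g :: "'k \<Rightarrow> 'x \<Rightarrow> real"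
  assumes S: "subspace S" and one: "(\<chi> i. 1) \<in> S"
    and mult: "\<And>f k. f \<in> S \<Longrightarrow> (\<chi> i. g k i * f $ i) \<in> S"
    and sep: "\<And>x x'. x \<noteq> x' \<Longrightarrow> \<exists>k. g k x \<noteq> g k x'"
  shows "S = UNIV"
proof -
  have affine: "(\<chi> i. (g k i - c) / e * f $ i) \<in> S" if "f \<in> S" for f k c e
  proof -
    have "(1 / e) *\<^sub>R ((\<chi> i. g k i * f $ i) - c *\<^sub>R f) \<in> S"
      using S mult[OF that] that by (intro subspace_scale subspace_diff) auto
    moreover have "(1 / e) *\<^sub>R ((\<chi> i. g k i * f $ i) - c *\<^sub>R f) = (\<chi> i. (g k i - c) / e * f $ i)"
      by (simp add: vec_eq_iff divide_inverse algebra_simps)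
    ultimately show ?thesis
      by simp
  qed
  have "axis x 1 \<in> S" for x
  proof -
    define k where "k x' = (SOME k. g k x \<noteq> g k x')" for x'
    have k: "g (k x') x \<noteq> g (k x') x'" if "x' \<noteq> x" for x'
      unfolding k_def using sep[of x x'] that by (metis (mono_tags) someI_ex)
    (* h x' vanishes at x' and is 1 at x, so the product over all x' \<noteq> x is the indicator of x *)
    define h where "h x' i = (g (k x') i - g (k x') x') / (g (k x') x - g (k x') x')" for x' i
    have prod_in_S: "(\<chi> i. \<Prod>x'\<in>F. h x' i) \<in> S" if "finite F" for F
      using that
    proof (induction F rule: finite_induct)
      case (insert x' F)
      then show ?case
        using affine[OF insert.IH, of "k x'" "g (k x') x'" "g (k x') x - g (k x') x'"]
        by (simp add: h_def)
    qed (use one in simp)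
    have "h x' x = 1" if "x' \<noteq> x" for x'
      using k[OF that] by (simp add: h_def)
    moreover have "h i i = 0" for i
      by (simp add: h_def)
    ultimately have "(\<chi> i. \<Prod>x'\<in>UNIV - {x}. h x' i) = axis x 1"
      by (auto simp: vec_eq_iff axis_def intro: prod_zero)
    then show ?thesis
      using prod_in_S[of "UNIV - {x}"] by simp
  qed
  then have "Basis \<subseteq> S"
    by (auto simp: Basis_vec_def)
  then show ?thesis
    using S span_Basis span_minimal by blast
qed

lemma weighted_shift_closed_imp_mult_closed:
  fixes S :: "(real^'x::finite) set" and w :: "'y::finite \<Rightarrow> 'x \<Rightarrow> real"
  assumes S: "subspace S"
    and closed: "\<And>f y. f \<in> S \<Longrightarrow> (\<chi> i. f $ (\<rho> i) * w y i) \<in> S"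
    and sum_w: "\<And>i. (\<Sum>y\<in>UNIV. w y i) = 1"
    and period: "\<rho> ^^ N = id" "N > 0"
    and f: "f \<in> S"
  shows "(\<chi> i. w y' ((\<rho> ^^ k) i) * f $ i) \<in> S"
proof -
  have shift: "(\<chi> i. g $ (\<rho> i)) \<in> S" if "g \<in> S" for g
  proof -
    have "(\<Sum>y\<in>UNIV. (\<chi> i. g $ (\<rho> i) * w y i)) \<in> S"
      using closed[OF that] by (intro subspace_sum[OF S]) auto
    moreover have "(\<Sum>y\<in>UNIV. (\<chi> i. g $ (\<rho> i) * w y i)) = (\<chi> i. g $ (\<rho> i))"
      by (simp add: vec_eq_iff sum_component sum_distrib_left[symmetric] sum_w)
    ultimately show ?thesis
      by simp
  qed
  have shift_pow: "(\<chi> i. g $ ((\<rho> ^^ n) i)) \<in> S" if "g \<in> S" for g n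
  proof (induction n)
    case (Suc n)
    from shift[OF this] show ?case
      by (simp add: funpow_Suc_right del: funpow.simps)
  qed (use that in simp)
  (* shifting by \<rho>^a, then the weighted shift for y', then shifting by \<rho>^k multiplies f by
     w y' \<circ> \<rho>^k, because \<rho>^(a+1+k) = id *)
  define a where "a = N * Suc k - Suc k"
  have "a + 1 + k = N * Suc k"
    using mult_le_mono1[of 1 N "Suc k"] period(2) by (simp add: a_def)
  moreover have "\<rho> ^^ (N * Suc k) = id"
    by (simp only: funpow_mult[symmetric] period(1) id_funpow)
  ultimately have id: "\<rho> ^^ (a + 1 + k) = id"
    by simp
  have "(\<chi> i. (\<chi> i. (\<chi> i. f $ ((\<rho> ^^ a) i)) $ (\<rho> i) * w y' i) $ ((\<rho> ^^ k) i)) \<in> S"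
    by (intro shift_pow closed f)
  moreover have "(\<rho> ^^ a) (\<rho> ((\<rho> ^^ k) i)) = i" for i
    using fun_cong[OF id, of i] by (simp add: funpow_add funpow_swap1)
  ultimately show ?thesis
    by (simp add: mult.commute)
qed

lemma span_eq_UNIV_if_weighted_shift_closed:
  fixes R :: "(real^'x::finite) set" and w :: "'y::finite \<Rightarrow> 'x \<Rightarrow> real"
  assumes one: "(\<chi> i. 1) \<in> R"
    and closed: "\<And>r y. r \<in> R \<Longrightarrow> (\<chi> i. r $ (\<rho> i) * w y i) \<in> R"
    and sum_w: "\<And>i. (\<Sum>y\<in>UNIV. w y i) = 1"
    and period: "\<rho> ^^ N = id" "N > 0"
    and sep: "\<And>x x'. x \<noteq> x' \<Longrightarrow> \<exists>k. w y' ((\<rho> ^^ k) x) \<noteq> w y' ((\<rho> ^^ k) x')"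
  shows "span R = UNIV"
proof (rule subspace_eq_UNIV_if_mult_closed[of _ "\<lambda>k i. w y' ((\<rho> ^^ k) i)"])
  let ?L = "\<lambda>y f. \<chi> i. f $ (\<rho> i) * w y i"
  have "linear (?L y)" for y
    by (rule linearI) (simp_all add: vec_eq_iff algebra_simps)
  then have "?L y f \<in> span R" if "f \<in> span R" for f y
    using closed that span_linear_image[of "?L y" R] span_mono[of "?L y ` R" R]
    by (metis (no_types, lifting) image_eqI image_subset_iff span_span)
  then show "(\<chi> i. w y' ((\<rho> ^^ k) i) * f $ i) \<in> span R" if "f \<in> span R" for f k
    using that sum_w period by (intro weighted_shift_closed_imp_mult_closed[of "span R"]) auto
qed (use one sep in \<open>auto intro: span_base\<close>)

lemma mod_shift_separates:
  fixes p d i j :: nat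
  assumes "0 < p" "p < d" "i < d" "j < d" "i \<noteq> j"
  shows "\<exists>k. ((k + i) mod d < p) \<noteq> ((k + j) mod d < p)"
proof -
  define t where "t = (j + d - i) mod d"
  have "t = (if i \<le> j then j - i else j + d - i)"
  proof (cases "i \<le> j")
    case True
    have eq: "j + d - i = (j - i) + d"
      using True by simp
    have "t = j - i"
      unfolding t_def eq mod_add_self2 using assms(4) by simp
    then show ?thesis
      using True by simp
  qed (use assms in \<open>simp add: t_def\<close>)
  then have t: "0 < t" "t < d"
    using assms by auto
  have shift: "(m + d - i + i) mod d = m" "(m + d - i + j) mod d = (m + t) mod d" if "m < d" for m
  proof -
    show "(m + d - i + i) mod d = m"
      using assms(3) that by simp
    have "m + d - i + j = m + (j + d - i)"
      using assms(3) by simp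
    then show "(m + d - i + j) mod d = (m + t) mod d"
      by (simp add: t_def mod_add_right_eq)
  qed
  show ?thesis
  proof (cases "p + t \<le> d")
    case True
    then have "(p - 1 + t) mod d = p - 1 + t"
      using t assms(1) by simp
    then have "((p - 1 + d - i + i) mod d < p) \<noteq> ((p - 1 + d - i + j) mod d < p)"
      using shift[of "p - 1"] t assms(1,2) by simp
    then show ?thesis by blast
  next
    case False
    then have "(p + t) mod d = p + t - d"
      using t assms(2) by (simp add: le_mod_geq)
    then have "((p + d - i + i) mod d < p) \<noteq> ((p + d - i + j) mod d < p)"
      using shift[of p] t assms(1,2) by simp
    then show ?thesis by blast
  qed
qed

lemma obtain_block_enumeration:
  fixes P :: "'x::finite \<Rightarrow> bool"
  assumes "P a" "\<not> P b"
  obtains cs :: "'x list" and p where "distinct cs" "set cs = UNIV" "0 < p" "p < length cs"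
    "\<And>i. i < length cs \<Longrightarrow> P (cs ! i) \<longleftrightarrow> i < p"
proof -
  obtain xs :: "'x list" where xs: "set xs = UNIV" "distinct xs"
    using finite_distinct_list[of "UNIV :: 'x set"] by auto
  define A where "A = filter P xs"
  define B where "B = filter (Not \<circ> P) xs"
  have "a \<in> set A" "b \<in> set B"
    using assms xs by (auto simp: A_def B_def)
  then have "0 < length A" "length A < length (A @ B)"
    by (auto simp: length_pos_if_in_set)
  moreover have "P ((A @ B) ! i) \<longleftrightarrow> i < length A" if "i < length (A @ B)" for i
  proof (cases "i < length A")
    case True
    then have "(A @ B) ! i \<in> set A"
      by (simp add: nth_append)
    then show ?thesis
      using True by (simp add: A_def)
  next
    case False
    then have "(A @ B) ! i \<in> set B"
      using that by (simp add: nth_append)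
    then show ?thesis
      using False by (simp add: B_def)
  qed
  moreover have "distinct (A @ B)" "set (A @ B) = UNIV"
    using xs by (auto simp: A_def B_def)
  ultimately show ?thesis
    using that by blast
qed

lemma funpow_cycle_of_list_nth:
  assumes "distinct cs" "i < length cs"
  shows "(cycle_of_list cs ^^ k) (cs ! i) = cs ! ((k + i) mod length cs)"
  using arg_cong[OF cyclic_rotation[OF assms(1), of k], of "\<lambda>xs. xs ! i"] assms(2)
  by (simp add: nth_rotate)

lemma obtain_separating_cycle:
  fixes v :: "'x::finite \<Rightarrow> 'b"
  assumes "v a \<noteq> v b"
  obtains \<rho> :: "'x \<Rightarrow> 'x" and d :: nat where "0 < d" "\<rho> ^^ d = id" "\<And>x x'. \<exists>k. (\<rho> ^^ k) x = x'"
    "\<And>x x'. x \<noteq> x' \<Longrightarrow> \<exists>k. v ((\<rho> ^^ k) x) \<noteq> v ((\<rho> ^^ k) x')"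
proof -
  (* along the cycle cs the level set {v = v a} occupies one block of positions,
     and the rotations of a single proper block separate positions *)
  obtain cs p where cs: "distinct cs" "set cs = UNIV" and p: "0 < p" "p < length cs"
    and block: "\<And>i. i < length cs \<Longrightarrow> v (cs ! i) = v a \<longleftrightarrow> i < p"
    by (rule obtain_block_enumeration[of "\<lambda>x. v x = v a" a b]) (use assms in auto)
  define d where "d = length cs"
  have d: "0 < d"
    using p unfolding d_def by linarith
  define \<rho> where "\<rho> = cycle_of_list cs"
  have pow: "(\<rho> ^^ k) (cs ! i) = cs ! ((k + i) mod d)" if "i < d" for k i
    using funpow_cycle_of_list_nth[OF cs(1)] that by (simp add: \<rho>_def d_def)
  have index: "\<exists>i<d. x = cs ! i" for x
    using cs(2) by (metis UNIV_I d_def in_set_conv_nth)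
  show ?thesis
  proof (rule that)
    show "0 < d"
      by (rule d)
    show "\<rho> ^^ d = id"
    proof
      fix x
      obtain i where "i < d" "x = cs ! i"
        using index by blast
      then show "(\<rho> ^^ d) x = id x"
        by (simp add: pow)
    qed
    fix x x'
    obtain i j where ij: "i < d" "x = cs ! i" "j < d" "x' = cs ! j"
      using index by meson
    have "(\<rho> ^^ (j + d - i)) x = x'"
      using ij by (simp add: pow)
    then show "\<exists>k. (\<rho> ^^ k) x = x'" ..
    assume "x \<noteq> x'"
    then have "i \<noteq> j"
      using ij by blast
    then obtain k where "((k + i) mod d < p) \<noteq> ((k + j) mod d < p)"
      using mod_shift_separates[OF p[folded d_def] ij(1,3)] by blast
    moreover have "v (cs ! ((k + i) mod d)) = v a \<longleftrightarrow> (k + i) mod d < p"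
      "v (cs ! ((k + j) mod d)) = v a \<longleftrightarrow> (k + j) mod d < p"
      using d unfolding d_def by (intro block; simp)+
    ultimately have "v ((\<rho> ^^ k) x) \<noteq> v ((\<rho> ^^ k) x')"
      using ij by (auto simp: pow)
    then show "\<exists>k. v ((\<rho> ^^ k) x) \<noteq> v ((\<rho> ^^ k) x')" ..
  qed
qed

lemma bij_if_funpow_eq_id:
  assumes "f ^^ n = id" "0 < n"
  shows "bij f"
proof (rule o_bij)
  have f: "f ^^ Suc (n - 1) = id"
    using assms by simp
  then show "f ^^ (n - 1) \<circ> f = id"
    by (simp only: funpow_Suc_right)
  from f show "f \<circ> f ^^ (n - 1) = id"
    by (simp only: funpow.simps(2))
qed

definition perm_matrix :: "('x::finite \<Rightarrow> 'x) \<Rightarrow> real^'x^'x" where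
  "perm_matrix \<rho> = (\<chi> i j. if \<rho> i = j then 1 else 0)"

lemma perm_matrix_mult_vec: "perm_matrix \<rho> *v f = (\<chi> i. f $ \<rho> i)"
  by (simp add: perm_matrix_def matrix_vector_mult_def vec_eq_iff if_distrib[of "\<lambda>t. t * _"]
      cong: if_cong)

lemma vec_mult_perm_matrix:
  assumes "bij \<sigma>"
  shows "f v* perm_matrix \<sigma> = (\<chi> j. f $ inv \<sigma> j)"
proof -
  have "\<sigma> i = j \<longleftrightarrow> i = inv \<sigma> j" for i j
    using assms by (auto simp: bij_inv_eq_iff)
  then show ?thesis
    by (simp add: perm_matrix_def vector_matrix_mult_def vec_eq_iff if_distrib[of "\<lambda>t. _ * t"]
        cong: if_cong)
qed

lemma column_stochastic_perm_matrix:
  assumes "bij \<sigma>"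
  shows "column_stochastic (perm_matrix \<sigma>)"
proof -
  have "(\<chi> i. 1) v* perm_matrix \<sigma> = (\<chi> j. (1::real))"
    using vec_mult_perm_matrix[OF assms] by (simp add: vec_eq_iff)
  then show ?thesis
    by (simp add: column_stochastic_def perm_matrix_def vector_matrix_mult_def vec_eq_iff)
qed

lemma vec_mult_diag_mat: "f v* diag_mat v = (\<chi> j. f $ j * v j)"
  by (simp add: diag_mat_def vector_matrix_mult_def vec_eq_iff if_distrib[of "\<lambda>t. _ * t"]
      cong: if_cong)

lemma diag_mat_mult_vec: "diag_mat v *v f = (\<chi> i. v i * f $ i)"
  by (simp add: diag_mat_def matrix_vector_mult_def vec_eq_iff if_distrib[of "\<lambda>t. t * _"]
      cong: if_cong)

lemma span_obs_row_perm_matrix: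
  fixes V :: "'y::finite \<Rightarrow> 'x::finite \<Rightarrow> real"
  assumes V: "transition_matrix V" and \<rho>: "bij \<rho>" "\<rho> ^^ N = id" "N > 0"
    and sep: "\<And>x x'. x \<noteq> x' \<Longrightarrow> \<exists>k. V y0 ((\<rho> ^^ k) x) \<noteq> V y0 ((\<rho> ^^ k) x')"
  shows "span (range (obs_row (perm_matrix (inv \<rho>)) V)) = UNIV"
proof (rule span_eq_UNIV_if_weighted_shift_closed[where w = V])
  show "(\<chi> i. 1) \<in> range (obs_row (perm_matrix (inv \<rho>)) V)"
    by (metis obs_row_Nil rangeI)
  fix r y assume "r \<in> range (obs_row (perm_matrix (inv \<rho>)) V)"
  then obtain ys where "r = obs_row (perm_matrix (inv \<rho>)) V ys"
    by blast
  then have "(\<chi> i. r $ \<rho> i * V y i) = obs_row (perm_matrix (inv \<rho>)) V (y # ys)"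
    using \<rho>(1)
    by (simp add: obs_row_Cons Wy_def vector_matrix_mul_assoc[symmetric] vec_mult_perm_matrix
        bij_imp_bij_inv inv_inv_eq vec_mult_diag_mat)
  then show "(\<chi> i. r $ \<rho> i * V y i) \<in> range (obs_row (perm_matrix (inv \<rho>)) V)"
    by (metis rangeI)
qed (use V \<rho> sep in \<open>auto simp: transition_matrix_def\<close>)

lemma span_act_perm_matrix:
  fixes V :: "'y::finite \<Rightarrow> 'x::finite \<Rightarrow> real"
  assumes V: "transition_matrix V" and \<rho>: "\<rho> ^^ N = id" "N > 0"
    and sep: "\<And>x x'. x \<noteq> x' \<Longrightarrow> \<exists>k. V y0 ((\<rho> ^^ k) x) \<noteq> V y0 ((\<rho> ^^ k) x')"
  shows "span (range (\<lambda>ys. act (perm_matrix \<rho>) V ys (\<chi> i. 1))) = UNIV"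
proof (rule span_eq_UNIV_if_weighted_shift_closed[where w = "\<lambda>y i. V y (\<rho> i)" and y' = y0])
  show "(\<chi> i. 1) \<in> range (\<lambda>ys. act (perm_matrix \<rho>) V ys (\<chi> i. 1))"
    by (metis act_def fold_Nil id_apply rangeI)
  fix r y assume "r \<in> range (\<lambda>ys. act (perm_matrix \<rho>) V ys (\<chi> i. 1))"
  then obtain ys where "r = act (perm_matrix \<rho>) V ys (\<chi> i. 1)"
    by blast
  then have "(\<chi> i. r $ \<rho> i * V y (\<rho> i)) = act (perm_matrix \<rho>) V (ys @ [y]) (\<chi> i. 1)"
    by (simp add: act_snoc Wy_def matrix_vector_mul_assoc[symmetric] perm_matrix_mult_vec
        diag_mat_mult_vec mult.commute)
  then show "(\<chi> i. r $ \<rho> i * V y (\<rho> i)) \<in> range (\<lambda>ys. act (perm_matrix \<rho>) V ys (\<chi> i. 1))"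
    by (metis rangeI)
next
  fix x x' :: 'x assume "x \<noteq> x'"
  then obtain k where k: "V y0 ((\<rho> ^^ k) x) \<noteq> V y0 ((\<rho> ^^ k) x')"
    using sep by blast
  have "\<rho> ((\<rho> ^^ (k + N - 1)) z) = (\<rho> ^^ k) z" for z
  proof -
    have "Suc (k + N - 1) = k + N"
      using \<rho>(2) by simp
    then have "\<rho> ((\<rho> ^^ (k + N - 1)) z) = (\<rho> ^^ (k + N)) z"
      by (metis comp_apply funpow.simps(2))
    also have "\<dots> = (\<rho> ^^ k) z"
      by (simp add: funpow_add \<rho>(1))
    finally show ?thesis .
  qed
  with k show "\<exists>k. V y0 (\<rho> ((\<rho> ^^ k) x)) \<noteq> V y0 (\<rho> ((\<rho> ^^ k) x'))"
    by metis
qed (use V \<rho> in \<open>auto simp: transition_matrix_def\<close>)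

lemma obtain_cyclic_witness:
  fixes V :: "'y::finite \<Rightarrow> 'x::finite \<Rightarrow> real"
  assumes V: "transition_matrix V" and nonconst: "\<exists>y. \<not> (\<exists>c. V y = (\<lambda>_. c))"
  obtains \<rho> :: "'x \<Rightarrow> 'x" where "bij \<rho>" "\<And>x x'. \<exists>k. (\<rho> ^^ k) x = x'"
    "span (range (obs_row (perm_matrix (inv \<rho>)) V)) = UNIV"
    "span (range (\<lambda>ys. act (perm_matrix \<rho>) V ys (\<chi> i. 1))) = UNIV"
proof -
  obtain y0 where "\<not> (\<exists>c. V y0 = (\<lambda>_. c))"
    using nonconst by blast
  then obtain a b where "V y0 a \<noteq> V y0 b"
    by (metis ext)
  then obtain \<rho> :: "'x \<Rightarrow> 'x" and d where \<rho>: "0 < d" "\<rho> ^^ d = id"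
    "\<And>x x'. \<exists>k. (\<rho> ^^ k) x = x'" "\<And>x x'. x \<noteq> x' \<Longrightarrow> \<exists>k. V y0 ((\<rho> ^^ k) x) \<noteq> V y0 ((\<rho> ^^ k) x')"
    by (rule obtain_separating_cycle) blast
  have "bij \<rho>"
    using \<rho>(2,1) by (rule bij_if_funpow_eq_id)
  show ?thesis
  proof (rule that)
    show "span (range (obs_row (perm_matrix (inv \<rho>)) V)) = UNIV"
      by (rule span_obs_row_perm_matrix[OF V \<open>bij \<rho>\<close> \<rho>(2,1,4)])
    show "span (range (\<lambda>ys. act (perm_matrix \<rho>) V ys (\<chi> i. 1))) = UNIV"
      by (rule span_act_perm_matrix[OF V \<rho>(2,1,4)])
  qed (use \<open>bij \<rho>\<close> \<rho>(3) in auto)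
qed

section \<open>Stationary distributions\<close>

text \<open>Replacing the equation of row \<open>x0\<close> of \<open>(I - W) P = 0\<close> by \<open>\<Sum>i. P i = 1\<close> gives a square
  system for the stationary distribution; where it is regular, Cramer's rule expresses the
  solution as a polynomial in \<open>W\<close> divided by a polynomial.\<close>

definition stationary_system :: "'x::finite \<Rightarrow> real^'x^'x \<Rightarrow> real^'x^'x" where
  "stationary_system x0 W = (\<chi> i j. if i = x0 then 1 else mat 1 $ i $ j - W $ i $ j)"

definition cramer_numerators :: "'x::finite \<Rightarrow> real^'x^'x \<Rightarrow> real^'x" where
  "cramer_numerators x0 W =
     (\<chi> k. det (\<chi> i j. if j = k then axis x0 1 $ i else stationary_system x0 W $ i $ j))"

lemma stationary_system_mult_vec:
  assumes "(\<Sum>i\<in>UNIV. P $ i) = 1" "W *v P = P"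
  shows "stationary_system x0 W *v P = axis x0 1"
proof -
  have "(stationary_system x0 W *v P) $ i = (if i = x0 then 1 else P $ i - (W *v P) $ i)" for i
    using assms(1)
    by (simp add: stationary_system_def matrix_vector_mult_def mat_def left_diff_distrib
        sum_subtractf if_distrib[of "\<lambda>t. t * _"] cong: if_cong)
  then show ?thesis
    using assms(2) by (simp add: vec_eq_iff axis_def)
qed

lemma cramer_numerators_eq:
  assumes "det (stationary_system x0 W) \<noteq> 0" "stationary_system x0 W *v P = axis x0 1"
  shows "cramer_numerators x0 W = det (stationary_system x0 W) *\<^sub>R P"
  using assms cramer[OF assms(1)] by (simp add: cramer_numerators_def vec_eq_iff)

lemma compact_prob_simplex: "compact (prob_simplex :: (real^'x::finite) set)"
proof -
  have "closed (prob_simplex :: (real^'x) set)"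
    unfolding prob_simplex_def
    by (intro closed_Collect_conj closed_Collect_all closed_Collect_le closed_Collect_eq
        continuous_intros)
  moreover have "prob_simplex \<subseteq> cbox 0 (\<chi> i. 1 :: real^'x)"
  proof
    fix P :: "real^'x" assume P: "P \<in> prob_simplex"
    then have "P $ i \<le> 1" for i
      using member_le_sum[of i UNIV "\<lambda>i. P $ i"] by (simp add: prob_simplex_def)
    then show "P \<in> cbox 0 (\<chi> i. 1)"
      using P by (simp add: mem_box_cart prob_simplex_def)
  qed
  ultimately show ?thesis
    by (metis compact_cbox compact_Int_closed inf.absorb_iff2)
qed

lemma convex_prob_simplex: "convex (prob_simplex :: (real^'x::finite) set)"
  unfolding convex_def prob_simplex_def
  by (auto simp: sum.distrib sum_distrib_left[symmetric])

lemma stationary_exists: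
  assumes "column_stochastic (W :: real^'x::finite^'x)"
  shows "\<exists>P\<in>prob_simplex. W *v P = P"
proof -
  have "(\<Sum>i\<in>UNIV. (W *v P) $ i) = (\<Sum>j\<in>UNIV. P $ j)" for P :: "real^'x"
    using assms
    by (simp add: column_stochastic_def matrix_vector_mult_def sum.swap[of _ UNIV]
        sum_distrib_right[symmetric])
  then have "(*v) W \<in> prob_simplex \<rightarrow> prob_simplex"
    using assms
    by (auto simp: prob_simplex_def column_stochastic_def matrix_vector_mult_def intro!: sum_nonneg)
  moreover have "axis undefined 1 \<in> (prob_simplex :: (real^'x) set)"
    by (simp add: prob_simplex_def axis_def)
  ultimately show ?thesis
    using brouwer[OF compact_prob_simplex convex_prob_simplex, of "(*v) W"]
    by (metis empty_iff matrix_vector_mult_linear_continuous_on)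
qed

lemma stationary_eq_cramer:
  assumes "column_stochastic W" "det (stationary_system x0 W) \<noteq> 0"
  shows "stationary W = (1 / det (stationary_system x0 W)) *\<^sub>R cramer_numerators x0 W"
proof -
  have unique: "P = (1 / det (stationary_system x0 W)) *\<^sub>R cramer_numerators x0 W"
    if "P \<in> prob_simplex" "W *v P = P" for P
  proof -
    have "stationary_system x0 W *v P = axis x0 1"
      using that by (intro stationary_system_mult_vec) (simp_all add: prob_simplex_def)
    then show ?thesis
      using assms(2) by (simp add: cramer_numerators_eq)
  qed
  show ?thesis
    unfolding stationary_def
    using stationary_exists[OF assms(1)] unique by (metis (mono_tags, lifting) the_equality)
qed

lemma polynomial_matrix_function_stationary_system:
  "polynomial_matrix_function F \<Longrightarrow> polynomial_matrix_function (\<lambda>z. stationary_system x0 (F z))"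
  unfolding polynomial_matrix_function_def stationary_system_def
  by (intro allI, case_tac "i = x0")
    (auto simp: real_polynomial_function_const real_polynomial_function_diff)

lemma polynomial_vector_function_cramer_numerators:
  assumes "polynomial_matrix_function F"
  shows "polynomial_vector_function (\<lambda>z. cramer_numerators x0 (F z))"
  unfolding polynomial_vector_function_def cramer_numerators_def
proof
  fix k
  have "polynomial_matrix_function
      (\<lambda>z. \<chi> i j. if j = k then axis x0 1 $ i else stationary_system x0 (F z) $ i $ j)"
    using polynomial_matrix_function_stationary_system[OF assms, of x0]
    unfolding polynomial_matrix_function_def
    by (intro allI, case_tac "j = k") (auto simp: real_polynomial_function_const)
  then show "real_polynomial_function (\<lambda>z. (\<chi> k. det (\<chi> i j. if j = k then axis x0 1 $ i
      else stationary_system x0 (F z) $ i $ j)) $ k)"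
    by (simp add: real_polynomial_function_det)
qed

lemma det_stationary_system_perm_matrix:
  fixes \<rho> :: "'x::finite \<Rightarrow> 'x"
  assumes "bij \<rho>" "\<And>x x'. \<exists>k. (\<rho> ^^ k) x = x'"
  shows "det (stationary_system x0 (perm_matrix \<rho>)) \<noteq> 0"
proof -
  let ?M = "stationary_system x0 (perm_matrix \<rho>)"
  have "x = 0" if x: "?M *v x = 0" for x
  proof -
    have row: "x $ \<rho> i = x $ i" if "i \<noteq> x0" for i
      using arg_cong[OF x, of "\<lambda>v. v $ i"] that
      by (simp add: stationary_system_def matrix_vector_mult_def mat_def left_diff_distrib
          sum_subtractf perm_matrix_def if_distrib[of "\<lambda>t. t * _"] cong: if_cong)
    have "(\<Sum>i\<in>UNIV. x $ \<rho> i) = (\<Sum>i\<in>UNIV. x $ i)"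
      using sum.reindex[of \<rho> UNIV "\<lambda>i. x $ i"] assms(1) by (simp add: bij_def)
    moreover have "(\<Sum>i\<in>UNIV. x $ \<rho> i) = x $ \<rho> x0 + (\<Sum>i\<in>UNIV - {x0}. x $ i)"
      by (simp add: sum.remove[of UNIV x0] row)
    moreover have "(\<Sum>i\<in>UNIV. x $ i) = x $ x0 + (\<Sum>i\<in>UNIV - {x0}. x $ i)"
      by (simp add: sum.remove[of UNIV x0])
    ultimately have "x $ \<rho> i = x $ i" for i
      using row by (cases "i = x0") auto
    then have "x $ (\<rho> ^^ k) i = x $ i" for k i
      by (induction k) auto
    then obtain c where const: "\<And>i. x $ i = c"
      using assms(2)[of x0] by metis
    have "(\<Sum>i\<in>UNIV. x $ i) = 0"
      using arg_cong[OF x, of "\<lambda>v. v $ x0"]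
      by (simp add: stationary_system_def matrix_vector_mult_def)
    then have "c = 0"
      by (simp add: const)
    then show ?thesis
      by (simp add: vec_eq_iff const)
  qed
  then show ?thesis
    by (simp add: invertible_det_nz[symmetric] invertible_left_inverse matrix_left_invertible_ker)
qed

section \<open>Genericity\<close>

lemma AE_Kspace_eq_zero:
  fixes V :: "'y::finite \<Rightarrow> 'x::finite \<Rightarrow> real" and F :: "'a::euclidean_space \<Rightarrow> real^'x^'x"
  assumes V: "transition_matrix V" "\<exists>y. \<not> (\<exists>c. V y = (\<lambda>_. c))"
    and F: "polynomial_matrix_function F" "surj F"
  shows "AE z in lborel. Kspace (mat_chart x0 (F z)) V = {0}"
proof -
  obtain \<rho> :: "'x \<Rightarrow> 'x" where \<rho>: "bij \<rho>" "span (range (obs_row (perm_matrix (inv \<rho>)) V)) = UNIV"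
    by (rule obtain_cyclic_witness[OF V]) blast
  let ?W0 = "perm_matrix (inv \<rho>)"
  have W0: "column_stochastic ?W0"
    using \<rho>(1) by (simp add: column_stochastic_perm_matrix bij_imp_bij_inv)
  obtain K where K: "K \<ge> 1" "span (obs_row ?W0 V ` {ys. length ys = K}) = UNIV"
    using span_obs_row_length_eq_UNIV[OF V(1) W0 \<rho>(2)] by blast
  obtain z0 where "F z0 = ?W0"
    using surjD[OF F(2), of ?W0] by auto
  then have "span (obs_row (mat_chart x0 (F z0)) V ` {ys. length ys = K}) = UNIV"
    using K(2) W0 by (simp add: mat_chart_eq)
  then have "AE z in lborel. span (obs_row (mat_chart x0 (F z)) V ` {ys. length ys = K}) = UNIV"
    using F(1) by (intro AE_span_eq_UNIV finite_words_length_eq polynomial_vector_function_obs_row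
        polynomial_matrix_function_mat_chart)
  then show ?thesis
    by eventually_elim (simp add: Kspace_eq_zero[OF kerP_eq_zero K(1)])
qed

lemma AE_Vk_eq_UNIV:
  fixes V :: "'y::finite \<Rightarrow> 'x::finite \<Rightarrow> real" and F :: "'a::euclidean_space \<Rightarrow> real^'x^'x"
  assumes V: "transition_matrix V" "\<exists>y. \<not> (\<exists>c. V y = (\<lambda>_. c))"
    and FG: "polynomial_matrix_function F" "polynomial_vector_function G" "surj (\<lambda>z. (F z, G z))"
  shows "AE z in lborel. Vk (mat_chart x0 (F z)) V (vec_chart x0 (G z))
    (k_PWV (mat_chart x0 (F z)) V (vec_chart x0 (G z))) = UNIV"
proof -
  obtain \<rho> :: "'x \<Rightarrow> 'x" where
    \<rho>: "bij \<rho>" "span (range (\<lambda>ys. act (perm_matrix \<rho>) V ys (\<chi> i. 1))) = UNIV"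
    by (rule obtain_cyclic_witness[OF V]) blast
  obtain K where
    K: "K \<ge> 1" "span ((\<lambda>ys. act (perm_matrix \<rho>) V ys (\<chi> i. 1)) ` {ys. length ys \<le> K}) = UNIV"
    using span_act_length_le_eq_UNIV[OF \<rho>(2)] by blast
  let ?P0 = "(1 / real CARD('x)) *\<^sub>R (\<chi> i. 1) :: real^'x"
  obtain z0 where z0: "F z0 = perm_matrix \<rho>" "G z0 = ?P0"
    using surjD[OF FG(3), of "(perm_matrix \<rho>, ?P0)"] by auto
  then have "span ((\<lambda>ys. act (mat_chart x0 (F z0)) V ys (vec_chart x0 (G z0)))
      ` {ys. length ys \<le> K}) = UNIV"
    using K(2) \<rho>(1)
    by (simp add: mat_chart_eq vec_chart_eq column_stochastic_perm_matrix span_act_scaleR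
        finite_words_length_le)
  then have "AE z in lborel.
      span ((\<lambda>ys. act (mat_chart x0 (F z)) V ys (vec_chart x0 (G z))) ` {ys. length ys \<le> K}) = UNIV"
    using FG(1,2) by (intro AE_span_eq_UNIV finite_words_length_le polynomial_vector_function_act
        polynomial_matrix_function_mat_chart polynomial_vector_function_vec_chart)
  then show ?thesis
    by eventually_elim (use K(1) in \<open>simp add: Vk_k_PWV_eq_UNIV\<close>)
qed

lemma span_act_cramer_numerators_perm_matrix:
  fixes \<rho> :: "'x::finite \<Rightarrow> 'x" and V :: "'y::finite \<Rightarrow> 'x \<Rightarrow> real"
  assumes "bij \<rho>" "\<And>x x'. \<exists>k. (\<rho> ^^ k) x = x'"
    and "span ((\<lambda>ys. act (perm_matrix \<rho>) V ys (\<chi> i. 1)) ` {ys. length ys \<le> K}) = UNIV"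
  shows "span ((\<lambda>ys. act (perm_matrix \<rho>) V ys (cramer_numerators x0 (perm_matrix \<rho>)))
    ` {ys. length ys \<le> K}) = UNIV"
proof -
  have D: "det (stationary_system x0 (perm_matrix \<rho>)) \<noteq> 0"
    by (rule det_stationary_system_perm_matrix[OF assms(1,2)])
  have "cramer_numerators x0 (perm_matrix \<rho>) =
      det (stationary_system x0 (perm_matrix \<rho>)) *\<^sub>R ((1 / real CARD('x)) *\<^sub>R (\<chi> i. 1))"
    by (intro cramer_numerators_eq D stationary_system_mult_vec)
      (simp_all add: perm_matrix_mult_vec vec_eq_iff)
  then show ?thesis
    using assms(3) D by (simp add: span_act_scaleR finite_words_length_le)
qed

lemma Vk_stationary_eq_UNIV:
  fixes V :: "'y::finite \<Rightarrow> 'x::finite \<Rightarrow> real"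
  assumes "column_stochastic W" "det (stationary_system x0 W) \<noteq> 0"
    and "span ((\<lambda>ys. act W V ys (cramer_numerators x0 W)) ` {ys. length ys \<le> K}) = UNIV" "K \<ge> 1"
  shows "Vk W V (stationary W) (k_PWV W V (stationary W)) = UNIV"
proof -
  have "stationary W = (1 / det (stationary_system x0 W)) *\<^sub>R cramer_numerators x0 W"
    using assms(1,2) by (rule stationary_eq_cramer)
  then have "span ((\<lambda>ys. act W V ys (stationary W)) ` {ys. length ys \<le> K}) = UNIV"
    using assms(2,3) by (simp add: span_act_scaleR finite_words_length_le)
  then show ?thesis
    by (rule Vk_k_PWV_eq_UNIV[OF _ assms(4)])
qed

lemma AE_Vk_stationary_eq_UNIV:
  fixes V :: "'y::finite \<Rightarrow> 'x::finite \<Rightarrow> real" and F :: "'a::euclidean_space \<Rightarrow> real^'x^'x"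
  assumes V: "transition_matrix V" "\<exists>y. \<not> (\<exists>c. V y = (\<lambda>_. c))"
    and F: "polynomial_matrix_function F" "surj F"
  shows "AE z in lborel. mat_chart x0 (F z) \<in> stochastic_matrices \<longrightarrow>
    Vk (mat_chart x0 (F z)) V (stationary (mat_chart x0 (F z)))
      (k_PWV (mat_chart x0 (F z)) V (stationary (mat_chart x0 (F z)))) = UNIV"
proof -
  obtain \<rho> :: "'x \<Rightarrow> 'x" where \<rho>: "bij \<rho>" "\<And>x x'. \<exists>k. (\<rho> ^^ k) x = x'"
    "span (range (\<lambda>ys. act (perm_matrix \<rho>) V ys (\<chi> i. 1))) = UNIV"
    by (rule obtain_cyclic_witness[OF V]) blast
  obtain K where
    K: "K \<ge> 1" "span ((\<lambda>ys. act (perm_matrix \<rho>) V ys (\<chi> i. 1)) ` {ys. length ys \<le> K}) = UNIV"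
    using span_act_length_le_eq_UNIV[OF \<rho>(3)] by blast
  obtain z0 where "F z0 = perm_matrix \<rho>"
    using surjD[OF F(2), of "perm_matrix \<rho>"] by auto
  then have z0: "mat_chart x0 (F z0) = perm_matrix \<rho>"
    using \<rho>(1) by (simp add: mat_chart_eq column_stochastic_perm_matrix)
  have F': "polynomial_matrix_function (\<lambda>z. mat_chart x0 (F z))"
    by (rule polynomial_matrix_function_mat_chart[OF F(1)])
  have "AE z in lborel. det (stationary_system x0 (mat_chart x0 (F z))) \<noteq> 0"
    using det_stationary_system_perm_matrix[OF \<rho>(1,2)] z0
    by (intro AE_real_polynomial_function_nonzero[where z = z0] real_polynomial_function_det
        polynomial_matrix_function_stationary_system F') simp
  moreover have "AE z in lborel. span ((\<lambda>ys. act (mat_chart x0 (F z)) V ys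
      (cramer_numerators x0 (mat_chart x0 (F z)))) ` {ys. length ys \<le> K}) = UNIV"
    using span_act_cramer_numerators_perm_matrix[OF \<rho>(1,2) K(2)] z0
    by (intro AE_span_eq_UNIV[where z' = z0] finite_words_length_le polynomial_vector_function_act
        F' polynomial_vector_function_cramer_numerators) simp_all
  ultimately show ?thesis
    by eventually_elim (simp add: stochastic_matrices_def Vk_stationary_eq_UNIV[OF _ _ _ K(1)])
qed

theorem lemma11:
  fixes V :: "'y::finite \<Rightarrow> 'x::finite \<Rightarrow> real" and x0 :: 'x
  assumes "transition_matrix V"
    and "\<exists>y. \<not> (\<exists>c. V y = (\<lambda>_. c))"
  shows "(AE MP in (lborel :: ((real^'x^'x) \<times> (real^'x)) measure).
            mat_chart x0 (fst MP) \<in> stochastic_matrices \<and> vec_chart x0 (snd MP) \<in> prob_simplex \<longrightarrow>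
              Kspace (mat_chart x0 (fst MP)) V = {0} \<and>
              Vk (mat_chart x0 (fst MP)) V (vec_chart x0 (snd MP))
                 (k_PWV (mat_chart x0 (fst MP)) V (vec_chart x0 (snd MP))) = UNIV)
       \<and> (AE M in (lborel :: (real^'x^'x) measure).
            mat_chart x0 M \<in> stochastic_matrices \<longrightarrow>
              Kspace (mat_chart x0 M) V = {0} \<and>
              Vk (mat_chart x0 M) V (stationary (mat_chart x0 M))
                 (k_PWV (mat_chart x0 M) V (stationary (mat_chart x0 M))) = UNIV)"
proof -
  have fst: "polynomial_matrix_function (fst :: (real^'x^'x) \<times> (real^'x) \<Rightarrow> _)"
    and snd: "polynomial_vector_function (snd :: (real^'x^'x) \<times> (real^'x) \<Rightarrow> _)"
    and id: "polynomial_matrix_function (\<lambda>M :: real^'x^'x. M)"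
    by (simp_all add: polynomial_matrix_function_bounded_linear
        polynomial_vector_function_bounded_linear
        bounded_linear_fst bounded_linear_snd bounded_linear_ident)
  have "surj (fst :: (real^'x^'x) \<times> (real^'x) \<Rightarrow> _)"
    and "surj (\<lambda>z :: (real^'x^'x) \<times> (real^'x). (fst z, snd z))"
    by (auto intro: surjI[of _ "\<lambda>M. (M, 0)"])
  then have "AE MP in lborel. Kspace (mat_chart x0 (fst MP)) V = {0} \<and>
      Vk (mat_chart x0 (fst MP)) V (vec_chart x0 (snd MP))
        (k_PWV (mat_chart x0 (fst MP)) V (vec_chart x0 (snd MP))) = UNIV"
    using AE_Kspace_eq_zero[OF assms fst] AE_Vk_eq_UNIV[OF assms fst snd] by (simp add: AE_conj_iff)
  moreover have "AE M in lborel. Kspace (mat_chart x0 M) V = {0} \<and>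
      (mat_chart x0 M \<in> stochastic_matrices \<longrightarrow> Vk (mat_chart x0 M) V (stationary (mat_chart x0 M))
        (k_PWV (mat_chart x0 M) V (stationary (mat_chart x0 M))) = UNIV)"
    using AE_Kspace_eq_zero[OF assms id] AE_Vk_stationary_eq_UNIV[OF assms id]
    by (simp add: AE_conj_iff)
  ultimately show ?thesis
    by (auto elim: eventually_mono)
qed

end
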